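(* Let $n\ge2$ and let $N_1,N_2$ be $n\times n$ hermitian matrices over $\mathbb{F}_{q^2}$ of rank $n-1$ with $\operatorname{rank}(N_1-N_2)=1$. If $\{N_1+\lambda\mathbf{y}\mathbf{y}^\ast: 0\neq\lambda\in\mathbb{F}_q\}$ is a leaf of $N_1$, then $\{N_2+\lambda\mathbf{y}\mathbf{y}^\ast: 0\neq\lambda\in\mathbb{F}_q\}$ is a leaf of $N_2$.
   Context: $\mathbb{F}_{q^2}$ is the field with $q^2$ elements with involution $\bar x=x^q$, fixed field $\mathbb{F}_q$; $X^\ast=\bar X^\top$; hermitian means $A^\ast=A$. Leaf: if $A$ is hermitian of rank $s<n$ and $\mathbf{x}$ is not in the column space of $A$, then $\{A+\lambda\mathbf{x}\mathbf{x}^\ast: 0\ne\lambda\in\mathbb{F}_q\}$ is a leaf of $A$. *)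

theory Defs
  imports "Jordan_Normal_Form.DL_Rank"
begin

text \<open>Throughout, the field 'a is finite of cardinality q^2, the involution is x |-> x^q,
  and the fixed field F_q is the set of elements with x^q = x.\<close>

definition conj_tr :: "nat \<Rightarrow> 'a::field mat \<Rightarrow> 'a mat" where
  "conj_tr q A = mat (dim_col A) (dim_row A) (\<lambda>(i,j). (A $$ (j,i)) ^ q)"

definition hermitian_q :: "nat \<Rightarrow> 'a::field mat \<Rightarrow> bool" where
  "hermitian_q q A \<longleftrightarrow> conj_tr q A = A"

definition outer_conj :: "nat \<Rightarrow> 'a::field vec \<Rightarrow> 'a mat" where
  "outer_conj q x = mat (dim_vec x) (dim_vec x) (\<lambda>(i,j). x $ i * (x $ j) ^ q)"

definition col_space :: "'a::field mat \<Rightarrow> 'a vec set" where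
  "col_space A = {A *\<^sub>v v | v. v \<in> carrier_vec (dim_col A)}"

definition leaf_set :: "nat \<Rightarrow> 'a::field mat \<Rightarrow> 'a vec \<Rightarrow> 'a mat set" where
  "leaf_set q A x = {A + smult_mat c (outer_conj q x) | c. c \<noteq> 0 \<and> c ^ q = c}"

definition is_leaf :: "nat \<Rightarrow> nat \<Rightarrow> 'a::field mat \<Rightarrow> 'a mat set \<Rightarrow> bool" where
  "is_leaf q n A S \<longleftrightarrow> A \<in> carrier_mat n n \<and> hermitian_q q A \<and> vec_space.rank n A < n \<and>
     (\<exists>x \<in> carrier_vec n. x \<notin> col_space A \<and> S = leaf_set q A x)"

end

(*
  Since |F| = q^2, the number q is a power of the characteristic (every prime divisor of |F| is the
  characteristic, by Sylow's theorem in the additive group), so x \<mapsto> x^q is an additive involution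
  and a hermitian matrix A satisfies  conj u \<bullet> A v = (conj v \<bullet> A u)^q.  Consequently, if A has
  corank one with kernel spanned by k, its column space is the hyperplane orthogonal to conj k.

  Write N1 - N2 = w c^T.  If c \<bullet> k were nonzero, then conj k \<bullet> w would be nonzero as well, so for
  a kernel vector v of N2 the vector N1 v = (c \<bullet> v) w could only lie in the column space of N1 if
  c \<bullet> v = 0; but then v is in the kernel of N1, i.e. a multiple of k, and c \<bullet> k \<noteq> 0 forces v = 0.
  Hence N2 k = 0, so N1 and N2 have the same column space.  Finally, a leaf of N1 determines its
  vector up to a scalar, since y y^* = c x x^* forces x to be a multiple of y; so y lies outside the
  column space of N1, hence outside that of N2.
*)

theory Submission
  imports Defs "HOL-Algebra.Sylow" "HOL-Algebra.Multiplicative_Group" "HOL-Computational_Algebra.Primes"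
begin

section \<open>Finite fields\<close>

lemma nat_pow_additive_monoid:
  "x [^]\<^bsub>\<lparr>carrier = H, monoid.mult = (+), one = (0::'a::semiring_1)\<rparr>\<^esub> (n::nat) = of_nat n * x"
  by (induct n) (simp_all add: nat_pow_def algebra_simps)

lemma prime_dvd_card_field_eq_CHAR:
  fixes r :: nat
  assumes r: "prime r" and dvd: "r dvd card (UNIV :: 'a::{finite,field} set)"
  shows "r = CHAR('a)"
proof -
  define G where "G = \<lparr>carrier = (UNIV :: 'a set), monoid.mult = (+), one = (0 :: 'a)\<rparr>"
  interpret group G
    by (rule groupI) (auto simp: G_def add_ac intro: exI[of _ "- x" for x])
  have ord: "Coset.order G = r ^ 1 * (card (UNIV :: 'a set) div r)"
    using dvd by (simp add: Coset.order_def G_def)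
  obtain H where H: "subgroup H G" "card H = r"
    using sylow_thm[OF r group_axioms ord] by (auto simp: G_def)
  have "\<not> H \<subseteq> {0}"
    using H(2) prime_gt_1_nat[OF r] card_mono[of "{0::'a}" H] by auto
  then obtain x where x: "x \<in> H" "x \<noteq> 0"
    by blast
  interpret H: group "G\<lparr>carrier := H\<rparr>"
    by (rule subgroup.subgroup_is_group[OF H(1) group_axioms])
  have "x [^]\<^bsub>G\<lparr>carrier := H\<rparr>\<^esub> Coset.order (G\<lparr>carrier := H\<rparr>) = \<one>\<^bsub>G\<lparr>carrier := H\<rparr>\<^esub>"
    using x(1) by (intro H.pow_order_eq_1) simp
  then have "of_nat r * x = 0"
    using H(2) nat_pow_additive_monoid[of H x r] by (simp add: Coset.order_def G_def)
  then have "CHAR('a) dvd r"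
    using x(2) by (simp add: of_nat_eq_0_iff_char_dvd)
  moreover have "CHAR('a) \<noteq> 1"
    by simp
  ultimately show ?thesis
    using r prime_nat_iff by metis
qed

lemma prime_power_multiplicity_if_unique_prime_divisor:
  fixes n p :: nat
  assumes "prime p" "n > 0" and only_p: "\<And>r. prime r \<Longrightarrow> r dvd n \<Longrightarrow> r = p"
  shows "n = p ^ multiplicity p n"
proof -
  have "normalize n = normalize (p ^ multiplicity p n)"
  proof (rule multiplicity_eq_imp_eq)
    fix r :: nat assume r: "prime r"
    show "multiplicity r n = multiplicity r (p ^ multiplicity p n)"
    proof (cases "r = p")
      case False
      then show ?thesis
        using r assms(1) only_p[OF r]
        by (auto intro!: not_dvd_imp_multiplicity_0 simp: multiplicity_distinct_prime_power)
    qed (use assms(1) in simp)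
  qed (use assms in auto)
  then show ?thesis by simp
qed

lemma sqrt_card_field_power_of_CHAR:
  assumes "card (UNIV :: 'a::{finite,field} set) = q ^ 2"
  shows "q = CHAR('a) ^ multiplicity CHAR('a) q"
proof (rule prime_power_multiplicity_if_unique_prime_divisor)
  show "q > 0"
    using assms finite_UNIV_card_ge_0[where ?'a = 'a] by (cases q) auto
  show "r = CHAR('a)" if "prime r" "r dvd q" for r
    using that assms by (intro prime_dvd_card_field_eq_CHAR) (auto simp: power2_eq_square)
qed (simp add: prime_CHAR_semidom finite_imp_CHAR_pos)

text \<open>The library lemma finite_field_power_card_eq_same requires the sort finite_field.\<close>
lemma field_power_card_eq_self:
  fixes x :: "'a::{finite,field}"
  shows "x ^ card (UNIV :: 'a set) = x"
proof (cases "x = 0")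
  case False
  interpret G: group "mult_of (class_ring :: 'a ring)"
    by (rule field.field_mult_group[OF class_field])
  have "x ^ (card (UNIV :: 'a set) - 1) = 1"
    using G.pow_order_eq_1[of x] False by (simp add: nat_pow_mult_of Coset.order_def card_Diff_singleton class_ring_simps)
  then show ?thesis
    using finite_UNIV_card_ge_0[where ?'a = 'a] by (simp add: power_eq_if)
qed (simp add: finite_UNIV_card_ge_0)


section \<open>Frobenius involutions and hermitian forms\<close>

locale frobenius_involution =
  fixes ty :: "'a::field itself" and q :: nat
  assumes power_q_add: "((a::'a) + b) ^ q = a ^ q + b ^ q"
    and power_q_power_q: "((a::'a) ^ q) ^ q = a"

lemma frobenius_involution_finite_field:
  assumes card: "card (UNIV :: 'a::{finite,field} set) = q ^ 2"
  shows "frobenius_involution TYPE('a) q"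
proof
  fix a b :: 'a
  have "prime CHAR('a)"
    by (simp add: prime_CHAR_semidom finite_imp_CHAR_pos)
  then show "(a + b) ^ q = a ^ q + b ^ q"
    using sqrt_card_field_power_of_CHAR[OF card] by (rule freshmans_dream')
  show "(a ^ q) ^ q = a"
    using field_power_card_eq_self[of a] card by (simp add: power_mult[symmetric] power2_eq_square)
qed


definition conj_vec :: "nat \<Rightarrow> 'a::field vec \<Rightarrow> 'a vec" where
  "conj_vec q u = vec (dim_vec u) (\<lambda>i. (u $ i) ^ q)"

lemma conj_vec_carrier [simp]: "u \<in> carrier_vec n \<Longrightarrow> conj_vec q u \<in> carrier_vec n"
  unfolding conj_vec_def by simp

lemma index_conj_vec [simp]:
  "dim_vec (conj_vec q u) = dim_vec u" "i < dim_vec u \<Longrightarrow> conj_vec q u $ i = (u $ i) ^ q"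
  unfolding conj_vec_def by simp_all

lemma hermitian_q_entry:
  assumes "A \<in> carrier_mat n n" "hermitian_q q A" "i < n" "j < n"
  shows "A $$ (i, j) = (A $$ (j, i)) ^ q"
proof -
  have "A $$ (i, j) = conj_tr q A $$ (i, j)"
    using assms(2) by (simp add: hermitian_q_def)
  with assms show ?thesis
    by (simp add: conj_tr_def)
qed

context frobenius_involution
begin

lemma q_pos: "q > 0"
  using power_q_power_q[of 0] by (cases q) auto

lemma power_q_diff: "((a::'a) - b) ^ q = a ^ q - b ^ q"
  using power_q_add[of "a - b" b] by (simp add: eq_diff_eq)

lemma power_q_sum: "(sum (f :: _ \<Rightarrow> 'a) A) ^ q = (\<Sum>i\<in>A. f i ^ q)"
  by (induction A rule: infinite_finite_induct) (simp_all add: q_pos power_q_add)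

lemma conj_vec_conj_vec [simp]: "conj_vec q (conj_vec q (u :: 'a vec)) = u"
  by (rule eq_vecI) (simp_all add: power_q_power_q)

lemma conj_vec_unit_vec [simp]: "conj_vec q (unit_vec n j :: 'a vec) = unit_vec n j"
  by (rule eq_vecI) (simp_all add: unit_vec_def q_pos)

lemma conj_vec_smult: "conj_vec q (t \<cdot>\<^sub>v (u :: 'a vec)) = t ^ q \<cdot>\<^sub>v conj_vec q u"
  by (rule eq_vecI) (simp_all add: power_mult_distrib)

lemma hermitian_q_minus:
  assumes A: "A \<in> carrier_mat n n" "hermitian_q q A" and B: "B \<in> carrier_mat n n" "hermitian_q q B"
  shows "hermitian_q q (A - B :: 'a mat)"
  unfolding hermitian_q_def
proof (rule eq_matI)
  fix i j assume "i < dim_row (A - B)" "j < dim_col (A - B)"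
  with A B have ij: "i < n" "j < n"
    by auto
  then show "conj_tr q (A - B) $$ (i, j) = (A - B) $$ (i, j)"
    using A B hermitian_q_entry[OF A, of i j] hermitian_q_entry[OF B, of i j]
    by (simp add: conj_tr_def power_q_diff)
qed (use A B in \<open>simp_all add: conj_tr_def\<close>)

lemma hermitian_q_form_swap:
  assumes A: "A \<in> carrier_mat n n" "hermitian_q q A"
    and u: "u \<in> carrier_vec n" and v: "v \<in> carrier_vec n"
  shows "conj_vec q u \<bullet> (A *\<^sub>v v) = (conj_vec q v \<bullet> (A *\<^sub>v (u :: 'a vec))) ^ q"
proof -
  have expand: "conj_vec q x \<bullet> (A *\<^sub>v y) = (\<Sum>i<n. (x $ i) ^ q * (\<Sum>j<n. A $$ (i, j) * y $ j))"
    if "x \<in> carrier_vec n" "y \<in> carrier_vec n" for x y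
    using A that unfolding scalar_prod_def mult_mat_vec_def
    by (auto simp: lessThan_atLeast0 intro!: sum.cong)
  have "conj_vec q u \<bullet> (A *\<^sub>v v) = (\<Sum>i<n. \<Sum>j<n. (u $ i) ^ q * A $$ (i, j) * v $ j)"
    by (simp add: expand[OF u v] sum_distrib_left mult.assoc)
  also have "\<dots> = (\<Sum>j<n. \<Sum>i<n. ((v $ j) ^ q * (A $$ (j, i) * u $ i)) ^ q)"
  proof (subst sum.swap, intro sum.cong refl)
    fix j i assume "j \<in> {..<n}" "i \<in> {..<n}"
    then show "(u $ i) ^ q * A $$ (i, j) * v $ j = ((v $ j) ^ q * (A $$ (j, i) * u $ i)) ^ q"
      using hermitian_q_entry[OF A, of i j] by (simp add: power_mult_distrib power_q_power_q mult_ac)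
  qed
  also have "\<dots> = (conj_vec q v \<bullet> (A *\<^sub>v u)) ^ q"
    by (simp only: expand[OF v u] sum_distrib_left power_q_sum)
  finally show ?thesis .
qed

end


section \<open>Column spaces of matrices of corank one and rank one\<close>

lemma nonzero_vec_index:
  assumes "v \<in> carrier_vec n" "v \<noteq> 0\<^sub>v n"
  shows "\<exists>i < n. v $ i \<noteq> 0"
  using assms by (metis eq_vecI index_zero_vec carrier_vecD)

lemma hyperplane_subset_imp_parallel:
  fixes r s :: "'a::field vec"
  assumes r: "r \<in> carrier_vec n" "r \<noteq> 0\<^sub>v n" and s: "s \<in> carrier_vec n"
    and orth: "\<And>z. z \<in> carrier_vec n \<Longrightarrow> r \<bullet> z = 0 \<Longrightarrow> s \<bullet> z = 0"
  shows "\<exists>t. s = t \<cdot>\<^sub>v r"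
proof -
  obtain i where i: "i < n" "r $ i \<noteq> 0"
    using nonzero_vec_index[OF r] by blast
  have "s $ j * r $ i = s $ i * r $ j" if j: "j < n" for j
  proof -
    define z where "z = r $ i \<cdot>\<^sub>v unit_vec n j - r $ j \<cdot>\<^sub>v unit_vec n i"
    have z: "z \<in> carrier_vec n"
      by (simp add: z_def)
    have dot: "x \<bullet> z = r $ i * x $ j - r $ j * x $ i" if "x \<in> carrier_vec n" for x
      unfolding z_def using that i(1) j
      by (subst scalar_prod_minus_distrib[of _ n]) (auto simp: scalar_prod_right_unit)
    have "r \<bullet> z = 0"
      using dot[OF r(1)] by simp
    then have "s \<bullet> z = 0"
      using orth z by blast
    then show ?thesis
      using dot[OF s] by (simp add: mult.commute)
  qed
  then have "s = (s $ i / r $ i) \<cdot>\<^sub>v r"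
    using i r s by (intro eq_vecI) (auto simp: field_simps)
  then show ?thesis ..
qed

lemma hyperplane_submodule:
  fixes r :: "'a::field vec"
  assumes "r \<in> carrier_vec n"
  shows "submodule class_ring {z \<in> carrier_vec n. r \<bullet> z = 0} (module_vec TYPE('a) n)"
proof -
  interpret vec_space "TYPE('a)" n .
  show ?thesis
    unfolding submodule_def using vec_module assms
    by (auto simp: scalar_prod_add_distrib scalar_prod_smult_distrib class_ring_simps module_vec_simps)
qed

lemma line_submodule:
  fixes w :: "'a::field vec"
  assumes "w \<in> carrier_vec n"
  shows "submodule class_ring {t \<cdot>\<^sub>v w | t. True} (module_vec TYPE('a) n)"
proof -
  interpret vec_space "TYPE('a)" n .
  show ?thesis
    unfolding submodule_def using vec_module assms
    apply (auto simp: class_ring_simps module_vec_simps)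
      apply (rule_tac x = "t + ta" in exI, simp add: add_smult_distrib_vec)
     apply (rule_tac x = 0 in exI, simp)
    apply (rule_tac x = "c * t" in exI, simp add: smult_smult_assoc)
    done
qed

lemma rank_pred_kernel_nonzero:
  fixes A :: "'a::field mat"
  assumes A: "A \<in> carrier_mat n n" and "vec_space.rank n A = n - 1" and "n > 0"
  shows "\<exists>k \<in> carrier_vec n. k \<noteq> 0\<^sub>v n \<and> A *\<^sub>v k = 0\<^sub>v n"
proof -
  have "n - 1 \<noteq> n"
    using \<open>n > 0\<close> by simp
  then have "det A = 0"
    using vec_space.det_rank_iff[OF A] assms(2) by simp
  then show ?thesis
    using det_0_iff_vec_prod_zero_field[OF A] by blast
qed

context vec_space
begin

lemma span_cols_eq_range:
  assumes "A \<in> carrier_mat n nc"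
  shows "span (set (cols A)) = {A *\<^sub>v x | x. x \<in> carrier_vec nc}"
  using col_space_eq[OF assms] assms unfolding col_space_def by auto

lemma span_insert_cols_rank_pred:
  assumes A: "A \<in> carrier_mat n nc" and "rank A = n - 1" and "n > 0"
    and z: "z \<in> carrier_vec n" "z \<notin> span (set (cols A))"
  shows "span (insert z (set (cols A))) = carrier_vec n"
proof -
  have cols: "set (cols A) \<subseteq> carrier_vec n"
    using A cols_dim by blast
  obtain T where T: "finite T" "maximal T (\<lambda>T. T \<subseteq> set (cols A) \<and> lin_indpt T)"
    using maximal_exists_superset[of "set (cols A)" "\<lambda>T. T \<subseteq> set (cols A) \<and> lin_indpt T" "{}"]
    by (auto simp: lin_dep_def)
  have T_cols: "T \<subseteq> set (cols A)" "lin_indpt T"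
    using T(2) unfolding maximal_def by auto
  with cols have TC: "T \<subseteq> carrier_vec n"
    by blast
  have "card T = n - 1"
    using rank_card_indpt[OF A T(2)] assms by simp
  have zT: "z \<notin> span T"
    using span_is_monotone[OF T_cols(1)] z(2) by blast
  then have "z \<notin> T"
    using in_own_span[OF TC] by blast
  have "basis (insert z T)"
  proof (rule dim_li_is_basis)
    show "lin_indpt (insert z T)"
      using lin_dep_iff_in_span[OF TC T_cols(2) z(1) \<open>z \<notin> T\<close>] zT by simp
    show "dim \<le> card (insert z T)"
      using T(1) \<open>z \<notin> T\<close> \<open>card T = n - 1\<close> \<open>n > 0\<close> dim_is_n by simp
  qed (use T(1) TC z(1) in auto)
  then have "carrier_vec n \<subseteq> span (insert z T)"
    unfolding basis_def by simp
  also have "\<dots> \<subseteq> span (insert z (set (cols A)))"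
    using T_cols(1) by (intro span_is_monotone) blast
  finally show ?thesis
    using span_closed[of "insert z (set (cols A))"] cols z(1) by auto
qed

lemma rank_pred_range_contains_hyperplane:
  assumes A: "A \<in> carrier_mat n nc" and rk: "rank A = n - 1"
    and r: "r \<in> carrier_vec n" "r \<noteq> 0\<^sub>v n"
    and orth: "\<And>x. x \<in> carrier_vec nc \<Longrightarrow> r \<bullet> (A *\<^sub>v x) = 0"
    and z: "z \<in> carrier_vec n" "r \<bullet> z = 0"
  shows "\<exists>x \<in> carrier_vec nc. A *\<^sub>v x = z"
proof (rule ccontr)
  assume "\<not> ?thesis"
  then have z_notin: "z \<notin> span (set (cols A))"
    using span_cols_eq_range[OF A] by auto
  have "n > 0"
    using r by (cases n) auto
  define H where "H = {w \<in> carrier_vec n. r \<bullet> w = 0}"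
  have "insert z (set (cols A)) \<subseteq> H"
  proof
    fix w assume "w \<in> insert z (set (cols A))"
    then consider "w = z" | "w \<in> span (set (cols A))"
      using in_own_span[of "set (cols A)"] A cols_dim by blast
    then show "w \<in> H"
    proof cases
      case 2
      then obtain x where "x \<in> carrier_vec nc" "w = A *\<^sub>v x"
        using span_cols_eq_range[OF A] by auto
      then show ?thesis
        using orth A by (simp add: H_def)
    qed (use z in \<open>simp add: H_def\<close>)
  qed
  then have "span (insert z (set (cols A))) \<subseteq> H"
    using hyperplane_submodule[OF r(1)] unfolding H_def by (intro span_is_subset) auto
  then have "carrier_vec n \<subseteq> H"
    using span_insert_cols_rank_pred[OF A rk \<open>n > 0\<close> z(1) z_notin] by simp
  then have "r \<bullet> unit_vec n i = 0" for i
    using unit_vec_carrier[of n i] unfolding H_def by blast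
  moreover obtain i where "i < n" "r $ i \<noteq> 0"
    using nonzero_vec_index[OF r] by blast
  ultimately show False
    using r(1) by (metis scalar_prod_right_unit)
qed

lemma rank_one_cols_parallel:
  assumes D: "D \<in> carrier_mat n nc" and rk: "rank D = 1"
  shows "\<exists>w \<in> carrier_vec n. w \<noteq> 0\<^sub>v n \<and> (\<forall>j < nc. \<exists>t. col D j = t \<cdot>\<^sub>v w)"
proof -
  have col_mem: "j < nc \<Longrightarrow> col D j \<in> set (cols D)" for j
    using D by (metis carrier_matD(2) cols_length cols_nth nth_mem)
  have col_carrier: "j < nc \<Longrightarrow> col D j \<in> carrier_vec n" for j
    using D by auto
  have "\<exists>j0 < nc. col D j0 \<noteq> 0\<^sub>v n"
  proof (rule ccontr)
    assume zero_cols: "\<not> ?thesis"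
    have "D = 0\<^sub>m n nc"
    proof (rule eq_matI)
      fix i j assume "i < dim_row (0\<^sub>m n nc)" "j < dim_col (0\<^sub>m n nc)"
      then show "D $$ (i, j) = 0\<^sub>m n nc $$ (i, j)"
        using zero_cols D by (metis carrier_matD index_col index_zero_mat(1,2,3) index_zero_vec(1))
    qed (use D in auto)
    then show False
      using rk rank_0I by simp
  qed
  then obtain j0 where j0: "j0 < nc" "col D j0 \<noteq> 0\<^sub>v n"
    by blast
  define w where "w = col D j0"
  have w: "w \<in> carrier_vec n" "w \<noteq> 0\<^sub>v n"
    using col_carrier j0 by (auto simp: w_def)
  have w_indpt: "lin_indpt {w}"
    using lin_dep_iff_in_span[of "{}" w] w span_empty by (simp add: lin_dep_def)
  have "col D j \<in> span {w}" if j: "j < nc" for j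
  proof (rule ccontr)
    assume out: "col D j \<notin> span {w}"
    then have "col D j \<noteq> w"
      using in_own_span[of "{w}"] w by auto
    then have "lin_indpt {col D j, w}"
      using lin_dep_iff_in_span[of "{w}" "col D j"] w_indpt w col_carrier[OF j] out by auto
    moreover have "{col D j, w} \<subseteq> set (cols D)"
      using col_mem j j0 by (auto simp: w_def)
    ultimately have "card {col D j, w} \<le> rank D"
      using rank_ge_card_indpt[OF D] by blast
    then show False
      using rk \<open>col D j \<noteq> w\<close> by simp
  qed
  moreover have "span {w} \<subseteq> {t \<cdot>\<^sub>v w | t. True}"
    using line_submodule[OF w(1)] w(1) by (intro span_is_subset) (auto intro!: exI[of _ 1])
  ultimately show ?thesis
    using w by blast
qed

lemma rank_one_factor:
  assumes D: "D \<in> carrier_mat n nc" and rk: "rank D = 1"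
  shows "\<exists>w c. w \<in> carrier_vec n \<and> w \<noteq> 0\<^sub>v n \<and> c \<in> carrier_vec nc \<and>
    (\<forall>u \<in> carrier_vec nc. D *\<^sub>v u = (c \<bullet> u) \<cdot>\<^sub>v w)"
proof -
  obtain w where w: "w \<in> carrier_vec n" "w \<noteq> 0\<^sub>v n" and "\<forall>j < nc. \<exists>t. col D j = t \<cdot>\<^sub>v w"
    using rank_one_cols_parallel[OF D rk] by blast
  then obtain t where t: "\<And>j. j < nc \<Longrightarrow> col D j = t j \<cdot>\<^sub>v w"
    by metis
  have "D *\<^sub>v u = (vec nc t \<bullet> u) \<cdot>\<^sub>v w" if u: "u \<in> carrier_vec nc" for u
  proof (rule eq_vecI)
    fix i assume "i < dim_vec ((vec nc t \<bullet> u) \<cdot>\<^sub>v w)"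
    then have i: "i < n"
      using w by simp
    have "D $$ (i, j) = t j * w $ i" if "j < nc" for j
      using t[OF that] D i that by (metis carrier_matD index_col index_smult_vec(1) carrier_vecD w(1))
    then show "(D *\<^sub>v u) $ i = ((vec nc t \<bullet> u) \<cdot>\<^sub>v w) $ i"
      using D u w i
      by (simp add: mult_mat_vec_def scalar_prod_def row_def sum_distrib_left mult_ac)
  qed (use D w in auto)
  then show ?thesis
    using w by (intro exI[of _ w] exI[of _ "vec nc t"]) auto
qed

end


section \<open>Hermitian matrices of corank one\<close>

lemma smult_vec_eq_zero_iff:
  fixes w :: "'a::field vec"
  assumes "w \<in> carrier_vec n"
  shows "a \<cdot>\<^sub>v w = 0\<^sub>v n \<longleftrightarrow> a = 0 \<or> w = 0\<^sub>v n"
  using assms by (auto simp: vec_eq_iff)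

lemma diff_eq_zero_vec_iff:
  fixes a b :: "'a::group_add vec"
  assumes "a \<in> carrier_vec n" "b \<in> carrier_vec n"
  shows "a - b = 0\<^sub>v n \<longleftrightarrow> a = b"
  using assms by (auto simp: vec_eq_iff)

context frobenius_involution
begin

lemma conj_vec_eq_zero_iff [simp]: "conj_vec q (u :: 'a vec) = 0\<^sub>v n \<longleftrightarrow> u = 0\<^sub>v n"
  by (auto simp: vec_eq_iff q_pos)

lemma hermitian_q_kernel_iff_orthogonal_range:
  assumes A: "A \<in> carrier_mat n n" "hermitian_q q A" and k: "k \<in> carrier_vec n"
  shows "A *\<^sub>v k = 0\<^sub>v n \<longleftrightarrow> (\<forall>x \<in> carrier_vec n. conj_vec q k \<bullet> (A *\<^sub>v x) = (0 :: 'a))"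
proof
  assume "A *\<^sub>v k = 0\<^sub>v n"
  then show "\<forall>x \<in> carrier_vec n. conj_vec q k \<bullet> (A *\<^sub>v x) = 0"
    using hermitian_q_form_swap[OF A k] q_pos by simp
next
  assume orth: "\<forall>x \<in> carrier_vec n. conj_vec q k \<bullet> (A *\<^sub>v x) = 0"
  show "A *\<^sub>v k = 0\<^sub>v n"
  proof (rule eq_vecI)
    fix j assume "j < dim_vec (0\<^sub>v n :: 'a vec)"
    then have j: "j < n"
      by simp
    have "(A *\<^sub>v k) $ j = conj_vec q (unit_vec n j) \<bullet> (A *\<^sub>v k)"
      using A k j by (simp add: scalar_prod_left_unit)
    also have "\<dots> = (conj_vec q k \<bullet> (A *\<^sub>v unit_vec n j)) ^ q"
      by (rule hermitian_q_form_swap[OF A unit_vec_carrier k])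
    finally show "(A *\<^sub>v k) $ j = 0\<^sub>v n $ j"
      using orth j q_pos by simp
  qed (use A in simp)
qed

lemma hermitian_corank_one_col_space:
  assumes A: "A \<in> carrier_mat n n" "hermitian_q q A" "vec_space.rank n A = n - 1"
    and k: "k \<in> carrier_vec n" "k \<noteq> 0\<^sub>v n" "A *\<^sub>v k = 0\<^sub>v n"
  shows "col_space A = {z \<in> carrier_vec n. conj_vec q k \<bullet> z = (0 :: 'a)}"
proof -
  have orth: "conj_vec q k \<bullet> (A *\<^sub>v x) = 0" if "x \<in> carrier_vec n" for x
    using hermitian_q_kernel_iff_orthogonal_range[OF A(1,2) k(1)] k(3) that by blast
  have "\<exists>x \<in> carrier_vec n. A *\<^sub>v x = z" if "z \<in> carrier_vec n" "conj_vec q k \<bullet> z = 0" for z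
    using vec_space.rank_pred_range_contains_hyperplane[OF A(1) A(3) conj_vec_carrier[OF k(1)] _ orth that] k(2)
    by simp
  then show ?thesis
    using orth A(1) unfolding col_space_def by fastforce
qed

lemma hermitian_corank_one_kernel:
  assumes A: "A \<in> carrier_mat n n" "hermitian_q q A" "vec_space.rank n A = n - 1"
    and k: "k \<in> carrier_vec n" "k \<noteq> 0\<^sub>v n" "A *\<^sub>v k = 0\<^sub>v n"
    and v: "v \<in> carrier_vec n" "A *\<^sub>v v = 0\<^sub>v n"
  shows "\<exists>t. v = t \<cdot>\<^sub>v (k :: 'a vec)"
proof -
  have "conj_vec q v \<bullet> z = 0" if "z \<in> carrier_vec n" "conj_vec q k \<bullet> z = 0" for z
  proof -
    have "z \<in> col_space A"
      using hermitian_corank_one_col_space[OF A k] that by simp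
    then obtain x where "x \<in> carrier_vec n" "z = A *\<^sub>v x"
      using A(1) unfolding col_space_def by auto
    then show ?thesis
      using hermitian_q_kernel_iff_orthogonal_range[OF A(1,2) v(1)] v(2) by blast
  qed
  then obtain t where "conj_vec q v = t \<cdot>\<^sub>v conj_vec q k"
    using hyperplane_subset_imp_parallel[of "conj_vec q k" n "conj_vec q v"] k v by auto
  then have "v = t ^ q \<cdot>\<^sub>v k"
    by (metis conj_vec_conj_vec conj_vec_smult)
  then show ?thesis ..
qed

lemma hermitian_rank_one_not_orthogonal:
  assumes D: "D \<in> carrier_mat n n" "hermitian_q q D"
    and w: "w \<in> carrier_vec n" and D_apply: "\<And>u. u \<in> carrier_vec n \<Longrightarrow> D *\<^sub>v u = (c \<bullet> u) \<cdot>\<^sub>v w"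
    and k: "k \<in> carrier_vec n" "D *\<^sub>v k \<noteq> 0\<^sub>v n"
  shows "conj_vec q k \<bullet> w \<noteq> (0 :: 'a)"
proof
  assume "conj_vec q k \<bullet> w = 0"
  then have "\<forall>x \<in> carrier_vec n. conj_vec q k \<bullet> (D *\<^sub>v x) = 0"
    using D_apply w k(1) by simp
  then show False
    using hermitian_q_kernel_iff_orthogonal_range[OF D k(1)] k(2) by blast
qed

lemma hermitian_corank_one_rank_one_perturbation_kernel:
  assumes N1: "N1 \<in> carrier_mat n n" "hermitian_q q N1" "vec_space.rank n N1 = n - 1"
    and N2: "N2 \<in> carrier_mat n n" "hermitian_q q N2" "vec_space.rank n N2 = n - 1"
    and rk: "vec_space.rank n (N1 - N2) = 1"
    and k: "k \<in> carrier_vec n" "k \<noteq> 0\<^sub>v n" "N1 *\<^sub>v k = 0\<^sub>v n"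
  shows "N2 *\<^sub>v k = (0\<^sub>v n :: 'a vec)"
proof -
  define D where "D = N1 - N2"
  have D: "D \<in> carrier_mat n n" "hermitian_q q D"
    using N1 N2 hermitian_q_minus by (auto simp: D_def)
  have D_minus: "D *\<^sub>v u = N1 *\<^sub>v u - N2 *\<^sub>v u" if "u \<in> carrier_vec n" for u
    unfolding D_def using N1(1) N2(1) that by (rule minus_mult_distrib_mat_vec)
  obtain w c where w: "w \<in> carrier_vec n" "w \<noteq> 0\<^sub>v n" and c: "c \<in> carrier_vec n"
    and D_apply: "\<And>u. u \<in> carrier_vec n \<Longrightarrow> D *\<^sub>v u = (c \<bullet> u) \<cdot>\<^sub>v w"
    using vec_space.rank_one_factor[OF D(1) rk[folded D_def]] by blast
  have "c \<bullet> k = 0"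
  proof (rule ccontr)
    assume ck: "c \<bullet> k \<noteq> 0"
    then have "D *\<^sub>v k \<noteq> 0\<^sub>v n"
      using D_apply[OF k(1)] w smult_vec_eq_zero_iff by metis
    then have kw: "conj_vec q k \<bullet> w \<noteq> 0"
      using hermitian_rank_one_not_orthogonal[OF D w(1) D_apply k(1)] by blast
    obtain v where v: "v \<in> carrier_vec n" "v \<noteq> 0\<^sub>v n" "N2 *\<^sub>v v = 0\<^sub>v n"
      using rank_pred_kernel_nonzero[OF N2(1,3)] k by fastforce
    have N1_v: "N1 *\<^sub>v v = (c \<bullet> v) \<cdot>\<^sub>v w"
      using D_minus[OF v(1)] D_apply[OF v(1)] v N1(1) by simp
    have "conj_vec q k \<bullet> (N1 *\<^sub>v v) = 0"
      using hermitian_q_kernel_iff_orthogonal_range[OF N1(1,2) k(1)] k(3) v(1) by blast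
    then have cv: "c \<bullet> v = 0"
      using N1_v kw k(1) w(1) by simp
    then have "N1 *\<^sub>v v = 0\<^sub>v n"
      using N1_v smult_vec_eq_zero_iff[OF w(1)] by simp
    then obtain t where t: "v = t \<cdot>\<^sub>v k"
      using hermitian_corank_one_kernel[OF N1 k v(1)] by blast
    then have "t * (c \<bullet> k) = 0"
      using cv c k(1) by simp
    then show False
      using t ck v(2) smult_vec_eq_zero_iff[OF k(1), of t] by simp
  qed
  then have "D *\<^sub>v k = 0\<^sub>v n"
    using D_apply[OF k(1)] smult_vec_eq_zero_iff[OF w(1)] by simp
  then have "N1 *\<^sub>v k - N2 *\<^sub>v k = 0\<^sub>v n"
    using D_minus[OF k(1)] by simp
  then show ?thesis
    using k N1(1) N2(1) diff_eq_zero_vec_iff[of "N1 *\<^sub>v k" n "N2 *\<^sub>v k"] by simp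
qed

end


section \<open>Leaves\<close>

lemma outer_conj_smult_imp_parallel:
  fixes x y :: "'a::field vec"
  assumes x: "x \<in> carrier_vec n" "x \<noteq> 0\<^sub>v n" and y: "y \<in> carrier_vec n" and "c \<noteq> 0"
    and eq: "outer_conj q y = c \<cdot>\<^sub>m outer_conj q x"
  shows "\<exists>s. x = s \<cdot>\<^sub>v y"
proof -
  have entry: "y $ i * (y $ j) ^ q = c * (x $ i * (x $ j) ^ q)" if "i < n" "j < n" for i j
    using arg_cong[OF eq, of "\<lambda>M. M $$ (i, j)"] x y that by (simp add: outer_conj_def)
  obtain j where j: "j < n" "x $ j \<noteq> 0"
    using nonzero_vec_index[OF x] by blast
  have "x = ((y $ j) ^ q / (c * (x $ j) ^ q)) \<cdot>\<^sub>v y"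
    using entry[OF _ j(1)] j \<open>c \<noteq> 0\<close> x y by (intro eq_vecI) (auto simp: field_simps)
  then show ?thesis ..
qed

lemma leaf_vector_not_in_col_space:
  assumes A: "A \<in> carrier_mat n n" and y: "y \<in> carrier_vec n"
    and leaf: "is_leaf q n A (leaf_set q A y)"
  shows "y \<notin> col_space A"
proof
  assume "y \<in> col_space A"
  then obtain u where u: "u \<in> carrier_vec n" "y = A *\<^sub>v u"
    using A unfolding col_space_def by auto
  obtain x where x: "x \<in> carrier_vec n" "x \<notin> col_space A" and same: "leaf_set q A y = leaf_set q A x"
    using leaf unfolding is_leaf_def by blast
  have "0\<^sub>v n \<in> col_space A"
    using A unfolding col_space_def by (auto intro!: exI[of _ "0\<^sub>v n"])
  then have "x \<noteq> 0\<^sub>v n"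
    using x(2) by auto
  have "A + 1 \<cdot>\<^sub>m outer_conj q y \<in> leaf_set q A y"
    unfolding leaf_set_def by (auto intro!: exI[of _ 1])
  then have "A + 1 \<cdot>\<^sub>m outer_conj q y \<in> leaf_set q A x"
    using same by simp
  then obtain c where c: "c \<noteq> 0" "A + 1 \<cdot>\<^sub>m outer_conj q y = A + c \<cdot>\<^sub>m outer_conj q x"
    unfolding leaf_set_def by auto
  have "outer_conj q y = c \<cdot>\<^sub>m outer_conj q x"
  proof (rule eq_matI)
    fix i j assume "i < dim_row (c \<cdot>\<^sub>m outer_conj q x)" "j < dim_col (c \<cdot>\<^sub>m outer_conj q x)"
    then show "outer_conj q y $$ (i, j) = (c \<cdot>\<^sub>m outer_conj q x) $$ (i, j)"
      using arg_cong[OF c(2), of "\<lambda>M. M $$ (i, j)"] A x y by (simp add: outer_conj_def)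
  qed (use x y in \<open>simp_all add: outer_conj_def\<close>)
  then obtain s where "x = s \<cdot>\<^sub>v y"
    using outer_conj_smult_imp_parallel[OF x(1) \<open>x \<noteq> 0\<^sub>v n\<close> y c(1)] by blast
  then have "x = A *\<^sub>v (s \<cdot>\<^sub>v u)"
    using u A by (simp add: mult_mat_vec)
  then show False
    using x u A unfolding col_space_def by auto
qed

theorem lemma3p6:
  fixes q n :: nat and N1 N2 :: "'a::{finite,field} mat" and y :: "'a vec"
  assumes "card (UNIV :: 'a set) = q ^ 2"
    and "n \<ge> 2"
    and "N1 \<in> carrier_mat n n" and "N2 \<in> carrier_mat n n"
    and "hermitian_q q N1" and "hermitian_q q N2"
    and "vec_space.rank n N1 = n - 1" and "vec_space.rank n N2 = n - 1"
    and "vec_space.rank n (N1 - N2) = 1"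
    and "y \<in> carrier_vec n"
    and "is_leaf q n N1 (leaf_set q N1 y)"
  shows "is_leaf q n N2 (leaf_set q N2 y)"
proof -
  interpret frobenius_involution "TYPE('a)" q
    by (rule frobenius_involution_finite_field[OF assms(1)])
  obtain k where k: "k \<in> carrier_vec n" "k \<noteq> 0\<^sub>v n" "N1 *\<^sub>v k = 0\<^sub>v n"
    using rank_pred_kernel_nonzero[OF assms(3,7)] assms(2) by auto
  have "N2 *\<^sub>v k = 0\<^sub>v n"
    by (rule hermitian_corank_one_rank_one_perturbation_kernel[OF assms(3,5,7) assms(4,6,8,9) k])
  then have "col_space N2 = col_space N1"
    using hermitian_corank_one_col_space[OF assms(3,5,7) k] hermitian_corank_one_col_space[OF assms(4,6,8) k(1,2)]
    by simp
  moreover have "y \<notin> col_space N1"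
    by (rule leaf_vector_not_in_col_space[OF assms(3,10,11)])
  ultimately show ?thesis
    using assms(2,4,6,8,10) unfolding is_leaf_def by auto
qed

end
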